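(* Let $(R,\mathfrak{m})$ be a Noetherian local domain of prime characteristic $p$. Then every prime ideal $\mathfrak{p}$ of $R_\infty$ is of the form $\sum_{i=1}^\ell(x_i^\infty)R_\infty$ for some $x_1,\dots,x_\ell\in R_\infty$. Moreover, if $\dim R<3$, there is an integer $\ell$, independent of $\mathfrak{p}$, such that every prime ideal of $R_\infty$ has this form with that $\ell$.
   Context: $R_\infty=\{x\in R^+: x^{p^n}\in R\text{ for some }n\ge0\}$, where $R^+$ is the integral closure of $R$ in an algebraic closure of its fraction field. For $x\in R_\infty$, $(x^\infty)R_\infty:=(x^{1/p^n}: n\ge0)R_\infty$. *)

theory Defs
  imports "HOL-Computational_Algebra.Polynomial"
begin

text \<open>Rings are modelled as subrings of a fixed field (the algebraic closure K of Frac R).\<close>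

definition subring_of :: "'a::comm_ring_1 set \<Rightarrow> bool" where
  "subring_of S \<longleftrightarrow> 0 \<in> S \<and> 1 \<in> S \<and> (\<forall>x\<in>S. \<forall>y\<in>S. x + y \<in> S \<and> x * y \<in> S \<and> - x \<in> S)"

definition ideal_in :: "'a::comm_ring_1 set \<Rightarrow> 'a set \<Rightarrow> bool" where
  "ideal_in S I \<longleftrightarrow> I \<subseteq> S \<and> 0 \<in> I \<and> (\<forall>x\<in>I. \<forall>y\<in>I. x + y \<in> I) \<and> (\<forall>r\<in>S. \<forall>x\<in>I. r * x \<in> I)"

definition prime_ideal_in :: "'a::comm_ring_1 set \<Rightarrow> 'a set \<Rightarrow> bool" where
  "prime_ideal_in S P \<longleftrightarrow> ideal_in S P \<and> P \<noteq> S \<and> (\<forall>x\<in>S. \<forall>y\<in>S. x * y \<in> P \<longrightarrow> x \<in> P \<or> y \<in> P)"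

definition maximal_ideal_in :: "'a::comm_ring_1 set \<Rightarrow> 'a set \<Rightarrow> bool" where
  "maximal_ideal_in S M \<longleftrightarrow> ideal_in S M \<and> M \<noteq> S \<and> (\<forall>I. ideal_in S I \<and> M \<subseteq> I \<longrightarrow> I = M \<or> I = S)"

definition local_ring :: "'a::comm_ring_1 set \<Rightarrow> bool" where
  "local_ring S \<longleftrightarrow> (\<exists>!M. maximal_ideal_in S M)"

text \<open>Ideal of S generated by A (smallest ideal containing A); sums of ideals are ideal_gen of unions.\<close>
definition ideal_gen :: "'a::comm_ring_1 set \<Rightarrow> 'a set \<Rightarrow> 'a set" where
  "ideal_gen S A = \<Inter>{I. ideal_in S I \<and> A \<subseteq> I}"

definition noetherian_ring :: "'a::comm_ring_1 set \<Rightarrow> bool" where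
  "noetherian_ring S \<longleftrightarrow> (\<forall>I. ideal_in S I \<longrightarrow> (\<exists>F. finite F \<and> F \<subseteq> I \<and> I = ideal_gen S F))"

definition krull_dim_less :: "'a::comm_ring_1 set \<Rightarrow> nat \<Rightarrow> bool" where
  "krull_dim_less S n \<longleftrightarrow>
     \<not> (\<exists>c :: nat \<Rightarrow> 'a set. (\<forall>i\<le>n. prime_ideal_in S (c i)) \<and> (\<forall>i<n. c i \<subset> c (Suc i)))"

definition alg_closed_field :: "'a::field itself \<Rightarrow> bool" where
  "alg_closed_field _ \<longleftrightarrow> (\<forall>q :: 'a poly. degree q > 0 \<longrightarrow> (\<exists>x. poly q x = 0))"

definition algebraic_over :: "'a::field set \<Rightarrow> bool" where
  "algebraic_over R \<longleftrightarrow> (\<forall>x :: 'a. \<exists>q. q \<noteq> 0 \<and> (\<forall>i. coeff q i \<in> R) \<and> poly q x = 0)"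

definition R_plus :: "'a::field set \<Rightarrow> 'a set" where
  "R_plus R = {x. \<exists>q. lead_coeff q = 1 \<and> (\<forall>i. coeff q i \<in> R) \<and> poly q x = 0}"

definition R_inf :: "nat \<Rightarrow> 'a::field set \<Rightarrow> 'a set" where
  "R_inf p R = {x \<in> R_plus R. \<exists>n. x ^ (p ^ n) \<in> R}"

text \<open>The p^n-th roots of x (unique in characteristic p).\<close>
definition pth_roots :: "nat \<Rightarrow> 'a::field \<Rightarrow> 'a set" where
  "pth_roots p x = {THE y. y ^ (p ^ n) = x | n. True}"

text \<open>(x^\<infinity>) S = (x^{1/p^n} : n \<ge> 0) S\<close>
definition inf_ideal :: "nat \<Rightarrow> 'a::field set \<Rightarrow> 'a \<Rightarrow> 'a set" where
  "inf_ideal p S x = ideal_gen S (pth_roots p x)"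

end

theory Submission
  imports Defs "HOL-Computational_Algebra.Primes"
begin

(* Let P be a prime of R_inf and q = P \<inter> R its contraction, a prime of R.  The key observation
   is that whenever x_1,...,x_l \<in> q generate q up to radical (every element of q has a power in
   (x_1,...,x_l)R), then P is generated by all p^n-th roots of the x_i: every z \<in> P has a
   p-power z^(p^n) in q, hence some z^(p^N) in (x_1,...,x_l)R, and taking p^N-th roots (which is
   a ring homomorphism, by the Frobenius) puts z into the ideal generated by the roots.

   Part 1 of the theorem follows since q
   is finitely generated.  For Part 2 we show that in a Noetherian local domain of dimension < 3
   every prime q is, up to radical, generated by max 2 (number of generators of m) elements:
   0 and m are clear, and an intermediate prime q is the radical of (x, y) for any x \<noteq> 0 in q
   and y \<in> q chosen by prime avoidance outside the finitely many other primes minimal over (x). *)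

lemma subring_add: "subring_of S \<Longrightarrow> x \<in> S \<Longrightarrow> y \<in> S \<Longrightarrow> x + y \<in> S"
  and subring_mult: "subring_of S \<Longrightarrow> x \<in> S \<Longrightarrow> y \<in> S \<Longrightarrow> x * y \<in> S"
  and subring_uminus: "subring_of S \<Longrightarrow> x \<in> S \<Longrightarrow> - x \<in> S"
  and subring_0: "subring_of S \<Longrightarrow> 0 \<in> S"
  and subring_1: "subring_of S \<Longrightarrow> 1 \<in> S"
  unfolding subring_of_def by auto

lemma subring_power: "subring_of S \<Longrightarrow> x \<in> S \<Longrightarrow> x ^ n \<in> S"
  by (induction n) (auto intro: subring_1 subring_mult)

lemma subring_prod: "subring_of S \<Longrightarrow> (\<And>i. i \<in> A \<Longrightarrow> f i \<in> S) \<Longrightarrow> prod f A \<in> S"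
  by (induction A rule: infinite_finite_induct) (auto intro: subring_1 subring_mult)

lemma ideal_subset: "ideal_in S I \<Longrightarrow> x \<in> I \<Longrightarrow> x \<in> S"
  and ideal_0: "ideal_in S I \<Longrightarrow> 0 \<in> I"
  and ideal_add: "ideal_in S I \<Longrightarrow> x \<in> I \<Longrightarrow> y \<in> I \<Longrightarrow> x + y \<in> I"
  and ideal_mult_left: "ideal_in S I \<Longrightarrow> r \<in> S \<Longrightarrow> x \<in> I \<Longrightarrow> r * x \<in> I"
  and ideal_mult_right: "ideal_in S I \<Longrightarrow> r \<in> S \<Longrightarrow> x \<in> I \<Longrightarrow> x * r \<in> I"
  unfolding ideal_in_def by (auto simp: mult.commute)

lemma ideal_diff: "subring_of S \<Longrightarrow> ideal_in S I \<Longrightarrow> x \<in> I \<Longrightarrow> y \<in> I \<Longrightarrow> x - y \<in> I"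
  using ideal_add[of S I x "-1 * y"] ideal_mult_left[of S I "-1" y]
  by (simp add: subring_1 subring_uminus)

lemma ideal_sum: "ideal_in S I \<Longrightarrow> (\<And>i. i \<in> A \<Longrightarrow> f i \<in> I) \<Longrightarrow> sum f A \<in> I"
  by (induction A rule: infinite_finite_induct) (auto intro: ideal_0 ideal_add)

lemma ideal_prod:
  assumes sr: "subring_of S" and I: "ideal_in S I" and A: "finite A" "j \<in> A"
    and fS: "\<And>i. i \<in> A \<Longrightarrow> f i \<in> S" and fj: "f j \<in> I"
  shows "prod f A \<in> I"
proof -
  have "prod f (A - {j}) \<in> S" by (rule subring_prod[OF sr]) (use fS in blast)
  then have "f j * prod f (A - {j}) \<in> I" by (rule ideal_mult_right[OF I _ fj])
  then show ?thesis using A by (simp add: prod.remove)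
qed

lemma ideal_power_mono:
  assumes "subring_of S" "ideal_in S I" "w \<in> S" "w ^ k \<in> I" "k \<le> K"
  shows "w ^ K \<in> I"
proof -
  have "w ^ K = w ^ (K - k) * w ^ k" using assms(5) by (simp flip: power_add)
  then show ?thesis using ideal_mult_left[OF assms(2) subring_power[OF assms(1,3)] assms(4)] by simp
qed

lemma ideal_whole: "subring_of S \<Longrightarrow> ideal_in S S"
  unfolding ideal_in_def subring_of_def by auto

lemma ideal_gen_least: "ideal_in S I \<Longrightarrow> A \<subseteq> I \<Longrightarrow> ideal_gen S A \<subseteq> I"
  unfolding ideal_gen_def by auto

lemma ideal_gen_superset: "A \<subseteq> ideal_gen S A"
  unfolding ideal_gen_def by auto

lemma ideal_gen_mono: "A \<subseteq> B \<Longrightarrow> ideal_gen S A \<subseteq> ideal_gen S B"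
  unfolding ideal_gen_def by auto

lemma ideal_gen_ideal:
  assumes "subring_of S" "A \<subseteq> S"
  shows "ideal_in S (ideal_gen S A)"
proof -
  have whole: "S \<in> {I. ideal_in S I \<and> A \<subseteq> I}" using assms ideal_whole by auto
  show ?thesis unfolding ideal_in_def
  proof (intro conjI ballI)
    show "ideal_gen S A \<subseteq> S" using whole unfolding ideal_gen_def by auto
    show "0 \<in> ideal_gen S A" unfolding ideal_gen_def ideal_in_def by auto
  next
    fix x y assume "x \<in> ideal_gen S A" "y \<in> ideal_gen S A"
    then show "x + y \<in> ideal_gen S A" unfolding ideal_gen_def ideal_in_def by auto
  next
    fix r x assume "r \<in> S" "x \<in> ideal_gen S A"
    then show "r * x \<in> ideal_gen S A" unfolding ideal_gen_def ideal_in_def by auto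
  qed
qed

lemma ideal_gen_insert_elem:
  assumes sr: "subring_of S" and Q: "ideal_in S Q" and a: "a \<in> S"
    and z: "z \<in> ideal_gen S (insert a Q)"
  shows "\<exists>q s. q \<in> Q \<and> s \<in> S \<and> z = q + s * a"
proof -
  define T where "T = {q + s * a | q s. q \<in> Q \<and> s \<in> S}"
  have "ideal_in S T" unfolding ideal_in_def
  proof (intro conjI ballI)
    show "T \<subseteq> S"
      unfolding T_def using subring_add[OF sr] subring_mult[OF sr _ a] ideal_subset[OF Q] by blast
    have "0 = 0 + 0 * a" by simp
    then show "0 \<in> T" unfolding T_def using ideal_0[OF Q] subring_0[OF sr] by blast
  next
    fix x y assume "x \<in> T" "y \<in> T"
    then obtain q1 s1 q2 s2 where "x = q1 + s1 * a" "y = q2 + s2 * a"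
      and "q1 \<in> Q" "q2 \<in> Q" "s1 \<in> S" "s2 \<in> S" unfolding T_def by auto
    moreover have "x + y = (q1 + q2) + (s1 + s2) * a" if "x = q1 + s1 * a" "y = q2 + s2 * a"
      using that by (simp add: algebra_simps)
    ultimately show "x + y \<in> T"
      unfolding T_def using ideal_add[OF Q] subring_add[OF sr] by blast
  next
    fix r x assume r: "r \<in> S" and "x \<in> T"
    then obtain q s where "x = q + s * a" "q \<in> Q" "s \<in> S" unfolding T_def by auto
    moreover have "r * (q + s * a) = r * q + (r * s) * a" by (simp add: algebra_simps)
    moreover have "r * q \<in> Q" "r * s \<in> S"
      using r \<open>q \<in> Q\<close> \<open>s \<in> S\<close> ideal_mult_left[OF Q] subring_mult[OF sr] by auto
    ultimately show "r * x \<in> T" unfolding T_def by blast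
  qed
  moreover have "a = 0 + 1 * a" "\<And>x. x = x + 0 * a" by simp_all
  then have "insert a Q \<subseteq> T"
    unfolding T_def using ideal_0[OF Q] subring_0[OF sr] subring_1[OF sr] by blast
  ultimately show ?thesis using ideal_gen_least z unfolding T_def by blast
qed

lemma ideal_gen_insert_ideal:
  "subring_of S \<Longrightarrow> ideal_in S Q \<Longrightarrow> a \<in> S \<Longrightarrow> ideal_in S (ideal_gen S (insert a Q))"
  by (intro ideal_gen_ideal) (auto dest: ideal_subset)

lemma ideal_one_whole:
  assumes I: "ideal_in S I" and "1 \<in> I"
  shows "I = S"
proof
  show "I \<subseteq> S" using ideal_subset[OF I] by blast
  show "S \<subseteq> I" using ideal_mult_left[OF I _ \<open>1 \<in> I\<close>] by fastforce
qed

lemma prime_ideal_ideal: "prime_ideal_in S P \<Longrightarrow> ideal_in S P"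
  unfolding prime_ideal_in_def by auto

lemma prime_ideal_one_notin: "prime_ideal_in S P \<Longrightarrow> 1 \<notin> P"
  using ideal_one_whole unfolding prime_ideal_in_def by blast

lemma prime_ideal_power:
  assumes sr: "subring_of S" and P: "prime_ideal_in S P" and x: "x \<in> S" and "x ^ n \<in> P"
  shows "x \<in> P"
  using assms(4)
proof (induction n)
  case 0
  then show ?case using prime_ideal_one_notin[OF P] by simp
next
  case (Suc n)
  then show ?case using P x subring_power[OF sr x, of n] unfolding prime_ideal_in_def by auto
qed

lemma prime_ideal_prod_notin:
  assumes sr: "subring_of S" and P: "prime_ideal_in S P" and "finite A"
    and "\<And>i. i \<in> A \<Longrightarrow> f i \<in> S" "\<And>i. i \<in> A \<Longrightarrow> f i \<notin> P"
  shows "prod f A \<notin> P"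
  using assms(3-)
proof (induction A rule: finite_induct)
  case empty
  then show ?case using prime_ideal_one_notin[OF P] by simp
next
  case (insert x F)
  then show ?case using P subring_prod[OF sr, of F f] unfolding prime_ideal_in_def by auto
qed

lemma prime_ideal_contract:
  assumes R: "subring_of R" and RS: "R \<subseteq> S" and P: "prime_ideal_in S P"
  shows "prime_ideal_in R (P \<inter> R)"
proof -
  have Pi: "ideal_in S P" by (rule prime_ideal_ideal[OF P])
  have "ideal_in R (P \<inter> R)" unfolding ideal_in_def
  proof (intro conjI ballI)
    show "0 \<in> P \<inter> R" using ideal_0[OF Pi] subring_0[OF R] by blast
  next
    fix x y assume "x \<in> P \<inter> R" "y \<in> P \<inter> R"
    then show "x + y \<in> P \<inter> R" using ideal_add[OF Pi] subring_add[OF R] by blast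
  next
    fix r x assume "r \<in> R" "x \<in> P \<inter> R"
    then show "r * x \<in> P \<inter> R" using ideal_mult_left[OF Pi] subring_mult[OF R] RS by blast
  qed blast
  moreover have "P \<inter> R \<noteq> R" using prime_ideal_one_notin[OF P] subring_1[OF R] by blast
  ultimately show ?thesis using P RS unfolding prime_ideal_in_def by blast
qed

lemma prime_avoidance:
  assumes sr: "subring_of S" and G: "finite G" and Gp: "\<And>g. g \<in> G \<Longrightarrow> prime_ideal_in S g"
    and q: "ideal_in S q" and nq: "\<And>g. g \<in> G \<Longrightarrow> \<not> q \<subseteq> g"
    and incomp: "\<And>g h. g \<in> G \<Longrightarrow> h \<in> G \<Longrightarrow> g \<noteq> h \<Longrightarrow> \<not> h \<subseteq> g"
  shows "\<exists>y\<in>q. \<forall>g\<in>G. y \<notin> g"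
proof -
  have "\<forall>g\<in>G. \<exists>x. x \<in> q \<and> x \<notin> g" using nq by blast
  then obtain a where a: "\<And>g. g \<in> G \<Longrightarrow> a g \<in> q \<and> a g \<notin> g" by metis
  have "\<forall>g\<in>G. \<forall>h\<in>G. g \<noteq> h \<longrightarrow> (\<exists>x. x \<in> h \<and> x \<notin> g)" using incomp by blast
  then obtain b where b: "\<And>g h. g \<in> G \<Longrightarrow> h \<in> G \<Longrightarrow> g \<noteq> h \<Longrightarrow> b g h \<in> h \<and> b g h \<notin> g"
    by metis
  have bS: "b g h \<in> S" if "g \<in> G" "h \<in> G" "g \<noteq> h" for g h
    using b[OF that] ideal_subset[OF prime_ideal_ideal[OF Gp[OF that(2)]]] by blast
  have aS: "a g \<in> S" if "g \<in> G" for g using a[OF that] ideal_subset[OF q] by blast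
  \<comment> \<open>\<open>z g\<close> lies in \<open>q\<close> and in every member of \<open>G\<close> except \<open>g\<close>.\<close>
  define z where "z g = (\<Prod>h\<in>G-{g}. b g h) * a g" for g
  have pS: "(\<Prod>h\<in>G-{g}. b g h) \<in> S" if "g \<in> G" for g
    by (rule subring_prod[OF sr]) (use bS that in auto)
  have zq: "z g \<in> q" if "g \<in> G" for g
    unfolding z_def using a[OF that] ideal_mult_left[OF q pS[OF that]] by blast
  have zg: "z g \<notin> g" if g: "g \<in> G" for g
  proof
    assume "z g \<in> g"
    moreover have "(\<Prod>h\<in>G-{g}. b g h) \<notin> g"
      by (rule prime_ideal_prod_notin[OF sr Gp[OF g]]) (use G b bS g in auto)
    ultimately show False using Gp[OF g] pS[OF g] aS[OF g] a[OF g]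
      unfolding z_def prime_ideal_in_def by blast
  qed
  have zh: "z g \<in> h" if gh: "g \<in> G" "h \<in> G" "g \<noteq> h" for g h
  proof -
    have "(\<Prod>h\<in>G-{g}. b g h) \<in> h"
      by (rule ideal_prod[OF sr prime_ideal_ideal[OF Gp[OF gh(2)]], of "G-{g}" h])
        (use G gh b bS in auto)
    then show ?thesis
      unfolding z_def by (rule ideal_mult_right[OF prime_ideal_ideal[OF Gp[OF gh(2)]] aS[OF gh(1)]])
  qed
  define y where "y = (\<Sum>g\<in>G. z g)"
  have "y \<in> q" unfolding y_def using ideal_sum[OF q, of G z] zq by blast
  moreover have "y \<notin> g" if g: "g \<in> G" for g
  proof
    assume yg: "y \<in> g"
    have rest: "(\<Sum>h\<in>G-{g}. z h) \<in> g"
      by (rule ideal_sum[OF prime_ideal_ideal[OF Gp[OF g]]]) (use zh g in auto)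
    have "z g = y - (\<Sum>h\<in>G-{g}. z h)" unfolding y_def using G g by (simp add: sum.remove)
    also have "\<dots> \<in> g" using ideal_diff[OF sr prime_ideal_ideal[OF Gp[OF g]] yg rest] .
    finally show False using zg[OF g] by blast
  qed
  ultimately show ?thesis by blast
qed

section \<open>Noetherian rings\<close>

lemma ideal_UN_incseq:
  assumes ids: "\<And>n. ideal_in S (f n)" and inc: "incseq f"
  shows "ideal_in S (\<Union>n. f n)"
  unfolding ideal_in_def
proof (intro conjI ballI)
  show "(\<Union>n. f n) \<subseteq> S" using ideal_subset[OF ids] by blast
  show "0 \<in> (\<Union>n. f n)" using ideal_0[OF ids] by blast
next
  fix x y assume "x \<in> (\<Union>n. f n)" "y \<in> (\<Union>n. f n)"
  then obtain i j where "x \<in> f i" "y \<in> f j" by blast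
  moreover have "f i \<subseteq> f (max i j)" "f j \<subseteq> f (max i j)" using inc by (simp_all add: monoD)
  ultimately have "x + y \<in> f (max i j)" using ideal_add[OF ids] by blast
  then show "x + y \<in> (\<Union>n. f n)" by blast
next
  fix r x assume "r \<in> S" "x \<in> (\<Union>n. f n)"
  then show "r * x \<in> (\<Union>n. f n)" using ideal_mult_left[OF ids] by blast
qed

lemma finite_subset_incseq:
  assumes "finite F" "F \<subseteq> (\<Union>n. f n)" "incseq f"
  shows "\<exists>N. F \<subseteq> f N"
  using assms(1,2)
proof (induction F rule: finite_induct)
  case (insert x F)
  then obtain N i where "F \<subseteq> f N" "x \<in> f i" by auto
  moreover have "f N \<subseteq> f (max N i)" "f i \<subseteq> f (max N i)" using assms(3) by (simp_all add: monoD)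
  ultimately have "insert x F \<subseteq> f (max N i)" by blast
  then show ?case by (rule exI)
qed simp

context
  fixes S :: "'a::comm_ring_1 set"
  assumes sr: "subring_of S" and noeth: "noetherian_ring S"
begin

lemma noetherian_incseq_stable:
  assumes ids: "\<And>n. ideal_in S (f n)" and inc: "incseq f"
  shows "\<exists>N. (\<Union>n. f n) \<subseteq> f N"
proof -
  obtain F where F: "finite F" "F \<subseteq> (\<Union>n. f n)" "(\<Union>n. f n) = ideal_gen S F"
    using noeth[unfolded noetherian_ring_def, rule_format, OF ideal_UN_incseq[OF ids inc]] by blast
  obtain N where "F \<subseteq> f N" using finite_subset_incseq[OF F(1,2) inc] by blast
  then have "ideal_gen S F \<subseteq> f N" by (rule ideal_gen_least[OF ids])
  then show ?thesis using F(3) by auto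
qed

lemma noetherian_maximal_member:
  assumes ne: "I0 \<in> \<F>" and ids: "\<And>I. I \<in> \<F> \<Longrightarrow> ideal_in S I"
  shows "\<exists>M\<in>\<F>. \<forall>I\<in>\<F>. M \<subseteq> I \<longrightarrow> I = M"
proof (rule ccontr)
  assume "\<not> ?thesis"
  then have "\<forall>M\<in>\<F>. \<exists>I. I \<in> \<F> \<and> M \<subset> I" by blast
  then obtain g where g: "\<And>M. M \<in> \<F> \<Longrightarrow> g M \<in> \<F> \<and> M \<subset> g M" by metis
  define f where "f n = (g ^^ n) I0" for n
  have fF: "f n \<in> \<F>" for n by (induction n) (auto simp: f_def ne g)
  have strict: "f n \<subset> f (Suc n)" for n using g[OF fF[of n]] by (simp add: f_def)
  then have "incseq f" by (intro incseq_SucI) blast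
  then obtain N where "(\<Union>n. f n) \<subseteq> f N" using noetherian_incseq_stable ids fF by blast
  then show False using strict[of N] by blast
qed

lemma noetherian_maximal_ideal_exists:
  assumes I: "ideal_in S I" and ne: "I \<noteq> S"
  shows "\<exists>M. maximal_ideal_in S M \<and> I \<subseteq> M"
proof -
  define \<F> where "\<F> = {J. ideal_in S J \<and> J \<noteq> S \<and> I \<subseteq> J}"
  obtain M where M: "M \<in> \<F>" and mx: "\<forall>J\<in>\<F>. M \<subseteq> J \<longrightarrow> J = M"
    using noetherian_maximal_member[of I \<F>] I ne unfolding \<F>_def by blast
  then have "maximal_ideal_in S M" unfolding maximal_ideal_in_def \<F>_def by blast
  then show ?thesis using M unfolding \<F>_def by blast
qed

lemma prime_avoiding_powers:
  assumes I: "ideal_in S I" and w: "w \<in> S" and nw: "\<forall>k. w ^ k \<notin> I"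
  shows "\<exists>Q. prime_ideal_in S Q \<and> I \<subseteq> Q \<and> w \<notin> Q"
proof -
  define \<F> where "\<F> = {J. ideal_in S J \<and> I \<subseteq> J \<and> (\<forall>k. w ^ k \<notin> J)}"
  obtain Q where Q: "Q \<in> \<F>" and mx: "\<forall>J\<in>\<F>. Q \<subseteq> J \<longrightarrow> J = Q"
    using noetherian_maximal_member[of I \<F>] I nw unfolding \<F>_def by blast
  have Qi: "ideal_in S Q" and IQ: "I \<subseteq> Q" and nQ: "\<forall>k. w ^ k \<notin> Q"
    using Q unfolding \<F>_def by auto
  \<comment> \<open>By maximality, enlarging \<open>Q\<close> by any \<open>a \<notin> Q\<close> captures a power of \<open>w\<close>.\<close>
  have enlarge: "\<exists>k q s. q \<in> Q \<and> s \<in> S \<and> w ^ k = q + s * a" if a: "a \<in> S" "a \<notin> Q" for a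
  proof -
    let ?J = "ideal_gen S (insert a Q)"
    have "Q \<subseteq> ?J" "a \<in> ?J" using ideal_gen_superset[of "insert a Q" S] by auto
    then have "?J \<notin> \<F>" using mx a(2) by blast
    then obtain k where "w ^ k \<in> ?J"
      using ideal_gen_insert_ideal[OF sr Qi a(1)] \<open>Q \<subseteq> ?J\<close> IQ unfolding \<F>_def by blast
    then show ?thesis using ideal_gen_insert_elem[OF sr Qi a(1)] by blast
  qed
  have "a \<in> Q \<or> b \<in> Q" if ab: "a \<in> S" "b \<in> S" "a * b \<in> Q" for a b
  proof (rule ccontr)
    assume "\<not> ?thesis"
    then obtain k1 q1 s1 k2 q2 s2 where A: "q1 \<in> Q" "s1 \<in> S" "w ^ k1 = q1 + s1 * a"
      and B: "q2 \<in> Q" "s2 \<in> S" "w ^ k2 = q2 + s2 * b"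
      using enlarge ab(1,2) by metis
    have "w ^ (k1 + k2) = q1 * w ^ k2 + (s1 * a) * q2 + (s1 * s2) * (a * b)"
      by (simp add: power_add A(3) B(3) algebra_simps)
    also have "\<dots> \<in> Q"
      using ideal_mult_right[OF Qi subring_power[OF sr w] A(1)]
        ideal_mult_left[OF Qi subring_mult[OF sr A(2) ab(1)] B(1)]
        ideal_mult_left[OF Qi subring_mult[OF sr A(2) B(2)] ab(3)]
      by (intro ideal_add[OF Qi]) auto
    finally show False using nQ by blast
  qed
  moreover have "Q \<noteq> S" using nQ spec[OF nQ, of 0] subring_1[OF sr] by auto
  moreover have "w \<notin> Q" using spec[OF nQ, of 1] by simp
  ultimately show ?thesis using Qi IQ unfolding prime_ideal_in_def by blast
qed

lemma noetherian_maximal_ideal_prime: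
  assumes M: "maximal_ideal_in S M"
  shows "prime_ideal_in S M"
proof -
  have Mi: "ideal_in S M" and "M \<noteq> S" using M unfolding maximal_ideal_in_def by auto
  then have "1 \<notin> M" using ideal_one_whole[OF Mi] by blast
  then obtain Q where Q: "prime_ideal_in S Q" "M \<subseteq> Q" "1 \<notin> Q"
    using prime_avoiding_powers[OF Mi subring_1[OF sr]] by auto
  then have "Q = M" using M prime_ideal_ideal[OF Q(1)] subring_1[OF sr]
    unfolding maximal_ideal_in_def by blast
  then show ?thesis using Q(1) by simp
qed

end

text \<open>A finite family of primes over \<open>I\<close> such that every prime over \<open>I\<close> contains one of them
  (in a Noetherian ring, the minimal primes over \<open>I\<close> form such a family).\<close>
definition finite_prime_base :: "'a::comm_ring_1 set \<Rightarrow> 'a set \<Rightarrow> bool" where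
  "finite_prime_base S I \<longleftrightarrow> (\<exists>F. finite F \<and> (\<forall>f\<in>F. prime_ideal_in S f \<and> I \<subseteq> f)
      \<and> (\<forall>P. prime_ideal_in S P \<and> I \<subseteq> P \<longrightarrow> (\<exists>f\<in>F. f \<subseteq> P)))"

lemma finite_prime_base_insert:
  assumes g: "finite_prime_base S (ideal_gen S (insert a M))"
  obtains F where "finite F" "\<forall>f\<in>F. prime_ideal_in S f \<and> M \<subseteq> f"
      "\<forall>P. prime_ideal_in S P \<and> M \<subseteq> P \<and> a \<in> P \<longrightarrow> (\<exists>f\<in>F. f \<subseteq> P)"
proof -
  obtain F where F: "finite F" "\<forall>f\<in>F. prime_ideal_in S f \<and> ideal_gen S (insert a M) \<subseteq> f"
      "\<forall>P. prime_ideal_in S P \<and> ideal_gen S (insert a M) \<subseteq> P \<longrightarrow> (\<exists>f\<in>F. f \<subseteq> P)"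
    using g unfolding finite_prime_base_def by blast
  have "M \<subseteq> ideal_gen S (insert a M)" using ideal_gen_superset[of "insert a M" S] by blast
  then have base: "\<forall>f\<in>F. prime_ideal_in S f \<and> M \<subseteq> f" using F(2) by blast
  have "\<exists>f\<in>F. f \<subseteq> P" if P: "prime_ideal_in S P" "M \<subseteq> P" "a \<in> P" for P
  proof -
    have "ideal_gen S (insert a M) \<subseteq> P"
      by (rule ideal_gen_least[OF prime_ideal_ideal[OF P(1)]]) (use P in blast)
    then show ?thesis using F(3) P(1) by blast
  qed
  then show ?thesis using that[OF F(1) base] by blast
qed

text \<open>A maximal counterexample
  \<open>M\<close> is not prime, so \<open>a * b \<in> M\<close> with \<open>a, b \<notin> M\<close>; the bases of \<open>M + (a)\<close>
  and \<open>M + (b)\<close> together form a base of \<open>M\<close>.\<close>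
lemma noetherian_finite_prime_base:
  fixes S :: "'a::comm_ring_1 set"
  assumes noeth: "noetherian_ring S" and sr: "subring_of S" and I: "ideal_in S I"
  shows "finite_prime_base S I"
proof (rule ccontr)
  assume "\<not> finite_prime_base S I"
  define \<F> where "\<F> = {J. ideal_in S J \<and> \<not> finite_prime_base S J}"
  obtain M where M: "M \<in> \<F>" and mx: "\<forall>J\<in>\<F>. M \<subseteq> J \<longrightarrow> J = M"
    using noetherian_maximal_member[OF sr noeth, of I \<F>] I \<open>\<not> finite_prime_base S I\<close>
    unfolding \<F>_def by blast
  have Mi: "ideal_in S M" and nM: "\<not> finite_prime_base S M" using M unfolding \<F>_def by auto
  have "M \<noteq> S"
  proof
    assume "M = S"
    then have "\<forall>P. prime_ideal_in S P \<longrightarrow> \<not> M \<subseteq> P"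
      unfolding prime_ideal_in_def ideal_in_def by blast
    then show False using nM unfolding finite_prime_base_def by blast
  qed
  moreover have "\<not> prime_ideal_in S M"
  proof
    assume "prime_ideal_in S M"
    then have "finite_prime_base S M" unfolding finite_prime_base_def by (intro exI[of _ "{M}"]) auto
    then show False using nM by blast
  qed
  ultimately obtain a b where ab: "a \<in> S" "b \<in> S" "a * b \<in> M" "a \<notin> M" "b \<notin> M"
    using Mi unfolding prime_ideal_in_def by blast
  have base: "finite_prime_base S (ideal_gen S (insert c M))" if c: "c \<in> S" "c \<notin> M" for c
  proof (rule ccontr)
    assume "\<not> ?thesis"
    then have "ideal_gen S (insert c M) \<in> \<F>"
      unfolding \<F>_def using ideal_gen_insert_ideal[OF sr Mi c(1)] by blast
    moreover have "insert c M \<subseteq> ideal_gen S (insert c M)" by (rule ideal_gen_superset)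
    ultimately show False using mx c(2) by blast
  qed
  obtain Fa where Fa: "finite Fa" "\<forall>f\<in>Fa. prime_ideal_in S f \<and> M \<subseteq> f"
      "\<forall>P. prime_ideal_in S P \<and> M \<subseteq> P \<and> a \<in> P \<longrightarrow> (\<exists>f\<in>Fa. f \<subseteq> P)"
    by (rule finite_prime_base_insert[OF base[OF ab(1,4)]])
  obtain Fb where Fb: "finite Fb" "\<forall>f\<in>Fb. prime_ideal_in S f \<and> M \<subseteq> f"
      "\<forall>P. prime_ideal_in S P \<and> M \<subseteq> P \<and> b \<in> P \<longrightarrow> (\<exists>f\<in>Fb. f \<subseteq> P)"
    by (rule finite_prime_base_insert[OF base[OF ab(2,5)]])
  have "finite_prime_base S M" unfolding finite_prime_base_def
  proof (intro exI[of _ "Fa \<union> Fb"] conjI allI impI ballI)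
    show "finite (Fa \<union> Fb)" using Fa(1) Fb(1) by blast
  next
    fix f assume "f \<in> Fa \<union> Fb"
    then show "prime_ideal_in S f" "M \<subseteq> f" using Fa(2) Fb(2) by blast+
  next
    fix P assume P: "prime_ideal_in S P \<and> M \<subseteq> P"
    then have "a \<in> P \<or> b \<in> P" using ab(1-3) unfolding prime_ideal_in_def by blast
    then show "\<exists>f\<in>Fa \<union> Fb. f \<subseteq> P"
    proof
      assume "a \<in> P" then show ?thesis using Fa(3) P by blast
    next
      assume "b \<in> P" then show ?thesis using Fb(3) P by blast
    qed
  qed
  then show False using nM by blast
qed

section \<open>Radical generators\<close>

definition radically_generates :: "'a::comm_ring_1 set \<Rightarrow> 'a set \<Rightarrow> 'a list \<Rightarrow> bool" where
  "radically_generates S q xs \<longleftrightarrow> set xs \<subseteq> q \<and> (\<forall>w\<in>q. \<exists>k. w ^ k \<in> ideal_gen S (set xs))"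

lemma noetherian_radically_generates:
  assumes "noetherian_ring S" "ideal_in S q"
  shows "\<exists>xs. radically_generates S q xs"
proof -
  obtain F where "finite F" "F \<subseteq> q" "q = ideal_gen S F"
    using assms unfolding noetherian_ring_def by blast
  moreover obtain xs where "set xs = F" using finite_list[OF \<open>finite F\<close>] by blast
  moreover have "\<forall>w\<in>q. w ^ 1 \<in> ideal_gen S F" using \<open>q = ideal_gen S F\<close> by simp
  ultimately have "radically_generates S q xs" unfolding radically_generates_def by blast
  then show ?thesis by blast
qed

lemma radically_generates_pad:
  assumes "radically_generates S q xs" "length xs \<le> L" "0 \<in> q"
  shows "\<exists>ys. length ys = L \<and> radically_generates S q ys"
proof -
  let ?ys = "xs @ replicate (L - length xs) 0"
  have "ideal_gen S (set xs) \<subseteq> ideal_gen S (set ?ys)" by (rule ideal_gen_mono) auto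
  moreover have "set ?ys \<subseteq> q" using assms(1,3) unfolding radically_generates_def by auto
  ultimately have "radically_generates S q ?ys"
    using assms(1) unfolding radically_generates_def by blast
  then show ?thesis using assms(2) by (intro exI[of _ ?ys]) simp
qed

section \<open>Noetherian local domains of dimension less than three\<close>

context
  fixes R :: "'a::field set" and m :: "'a set"
  assumes sr: "subring_of R" and noeth: "noetherian_ring R"
    and m: "maximal_ideal_in R m" and m_unique: "\<And>M. maximal_ideal_in R M \<Longrightarrow> M = m"
    and dim: "krull_dim_less R 3"
begin

lemma zero_prime: "prime_ideal_in R {0}"
proof -
  have "{0} \<noteq> R" using subring_1[OF sr] by force
  then show ?thesis unfolding prime_ideal_in_def ideal_in_def using subring_0[OF sr] by simp
qed

lemma m_prime: "prime_ideal_in R m"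
  by (rule noetherian_maximal_ideal_prime[OF sr noeth m])

lemma prime_subset_m:
  assumes "prime_ideal_in R Q"
  shows "Q \<subseteq> m"
proof -
  have "ideal_in R Q" "Q \<noteq> R" using assms unfolding prime_ideal_in_def by blast+
  then obtain M where "maximal_ideal_in R M" "Q \<subseteq> M"
    using noetherian_maximal_ideal_exists[OF sr noeth] by blast
  then show ?thesis using m_unique by blast
qed

lemma no_prime_chain:
  assumes "prime_ideal_in R a" "prime_ideal_in R b" "prime_ideal_in R c" "prime_ideal_in R d"
    and "a \<subset> b" "b \<subset> c" "c \<subset> d"
  shows False
proof -
  define ch where "ch i = [a, b, c, d] ! i" for i
  have "\<forall>i\<le>3. prime_ideal_in R (ch i)"
  proof (intro allI impI)
    fix i :: nat assume "i \<le> 3"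
    then have "i = 0 \<or> i = 1 \<or> i = 2 \<or> i = 3" by arith
    then show "prime_ideal_in R (ch i)" using assms unfolding ch_def by auto
  qed
  moreover have "\<forall>i<3. ch i \<subset> ch (Suc i)"
  proof (intro allI impI)
    fix i :: nat assume "i < 3"
    then have "i = 0 \<or> i = 1 \<or> i = 2" by arith
    then show "ch i \<subset> ch (Suc i)" using assms unfolding ch_def by auto
  qed
  ultimately show False using dim unfolding krull_dim_less_def by blast
qed

text \<open>Primes strictly between \<open>0\<close> and \<open>m\<close>; by the dimension bound they are pairwise
  incomparable.\<close>
definition intermediate_prime :: "'a set \<Rightarrow> bool" where
  "intermediate_prime Q \<longleftrightarrow> prime_ideal_in R Q \<and> Q \<noteq> {0} \<and> Q \<noteq> m"

lemma intermediate_prime_incomparable: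
  assumes "intermediate_prime Q1" "intermediate_prime Q2" "Q1 \<subseteq> Q2"
  shows "Q1 = Q2"
proof (rule ccontr)
  assume "Q1 \<noteq> Q2"
  have p1: "prime_ideal_in R Q1" and p2: "prime_ideal_in R Q2"
    using assms unfolding intermediate_prime_def by auto
  have "0 \<in> Q1" "Q1 \<noteq> {0}" "Q2 \<noteq> m"
    using ideal_0[OF prime_ideal_ideal[OF p1]] assms(1,2) unfolding intermediate_prime_def by simp_all
  then have "{0} \<subset> Q1" "Q1 \<subset> Q2" "Q2 \<subset> m"
    using prime_subset_m[OF p2] assms(3) \<open>Q1 \<noteq> Q2\<close> by auto
  then show False by (rule no_prime_chain[OF zero_prime p1 p2 m_prime])
qed

text \<open>Only finitely many intermediate primes contain a given nonzero \<open>x\<close>: each of them is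
  a member of a finite prime base of \<open>(x)\<close>.\<close>
lemma finite_intermediate_primes_containing:
  assumes x: "x \<in> R" "x \<noteq> 0"
  shows "finite {Q. intermediate_prime Q \<and> x \<in> Q}"
proof -
  have Ix: "ideal_in R (ideal_gen R {x})" using ideal_gen_ideal[OF sr, of "{x}"] x by simp
  obtain F where F: "finite F" "\<forall>f\<in>F. prime_ideal_in R f \<and> ideal_gen R {x} \<subseteq> f"
    "\<forall>P. prime_ideal_in R P \<and> ideal_gen R {x} \<subseteq> P \<longrightarrow> (\<exists>f\<in>F. f \<subseteq> P)"
    using noetherian_finite_prime_base[OF noeth sr Ix] unfolding finite_prime_base_def by blast
  have "Q \<in> F" if Q: "intermediate_prime Q" "x \<in> Q" for Q
  proof -
    have pQ: "prime_ideal_in R Q" using Q(1) unfolding intermediate_prime_def by blast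
    have "ideal_gen R {x} \<subseteq> Q" using ideal_gen_least[OF prime_ideal_ideal[OF pQ]] Q(2) by blast
    then obtain f where f: "f \<in> F" "f \<subseteq> Q" using F(3) pQ by blast
    have "x \<in> f" using F(2) f(1) ideal_gen_superset[of "{x}" R] by blast
    then have "f \<noteq> {0}" using x(2) by blast
    moreover have "f \<noteq> m" using f(2) prime_subset_m[OF pQ] Q(1) unfolding intermediate_prime_def by blast
    ultimately have "intermediate_prime f" using F(2) f(1) unfolding intermediate_prime_def by blast
    then show ?thesis using intermediate_prime_incomparable[OF _ Q(1) f(2)] f(1) by blast
  qed
  then have "{Q. intermediate_prime Q \<and> x \<in> Q} \<subseteq> F" by blast
  then show ?thesis using F(1) by (rule finite_subset)
qed

lemma intermediate_prime_two_generators: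
  assumes q: "intermediate_prime q"
  shows "\<exists>x y. radically_generates R q [x, y]"
proof -
  have qp: "prime_ideal_in R q" and qi: "ideal_in R q"
    using q prime_ideal_ideal unfolding intermediate_prime_def by auto
  obtain x where x: "x \<in> q" "x \<noteq> 0" using q ideal_0[OF qi] unfolding intermediate_prime_def by blast
  have xR: "x \<in> R" using ideal_subset[OF qi x(1)] .
  define G where "G = {Q. intermediate_prime Q \<and> x \<in> Q} - {q}"
  have G_intermediate: "intermediate_prime g" if "g \<in> G" for g using that unfolding G_def by blast
  have "\<exists>y\<in>q. \<forall>g\<in>G. y \<notin> g"
  proof (rule prime_avoidance[OF sr _ _ qi])
    show "finite G" unfolding G_def using finite_intermediate_primes_containing[OF xR x(2)] by blast
    show "prime_ideal_in R g" if "g \<in> G" for g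
      using G_intermediate[OF that] unfolding intermediate_prime_def by blast
    show "\<not> q \<subseteq> g" if "g \<in> G" for g
      using intermediate_prime_incomparable[OF q G_intermediate[OF that]] that unfolding G_def by blast
    show "\<not> h \<subseteq> g" if "g \<in> G" "h \<in> G" "g \<noteq> h" for g h
      using intermediate_prime_incomparable[OF G_intermediate[OF that(2)] G_intermediate[OF that(1)]]
        that(3) by blast
  qed
  then obtain y where y: "y \<in> q" "\<forall>g\<in>G. y \<notin> g" by blast
  have yR: "y \<in> R" using ideal_subset[OF qi y(1)] .
  \<comment> \<open>A prime over \<open>(x, y)\<close> missing some \<open>w \<in> q\<close> would be an intermediate prime
     containing \<open>x\<close>, hence equal to \<open>q\<close> or in \<open>G\<close>; both are impossible.\<close>
  have "\<exists>k. w ^ k \<in> ideal_gen R {x, y}" if w: "w \<in> q" for w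
  proof (rule ccontr)
    assume "\<not> ?thesis"
    moreover have "ideal_in R (ideal_gen R {x, y})" by (rule ideal_gen_ideal[OF sr]) (use xR yR in blast)
    ultimately obtain Q where Q: "prime_ideal_in R Q" "ideal_gen R {x, y} \<subseteq> Q" "w \<notin> Q"
      using prime_avoiding_powers[OF sr noeth _ ideal_subset[OF qi w]] by blast
    have xyQ: "x \<in> Q" "y \<in> Q" using Q(2) ideal_gen_superset[of "{x, y}" R] by blast+
    moreover have "Q \<noteq> m" using prime_subset_m[OF qp] w Q(3) by blast
    ultimately have "intermediate_prime Q" using Q(1) x(2) unfolding intermediate_prime_def by blast
    then show False using Q(3) w y(2) xyQ unfolding G_def by blast
  qed
  then have "radically_generates R q [x, y]"
    using x(1) y(1) unfolding radically_generates_def by simp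
  then show ?thesis by blast
qed

lemma primes_radically_generated_bounded:
  "\<exists>L. \<forall>q. prime_ideal_in R q \<longrightarrow> (\<exists>ys. length ys = L \<and> radically_generates R q ys)"
proof -
  obtain ms where ms: "radically_generates R m ms"
    using noetherian_radically_generates[OF noeth prime_ideal_ideal[OF m_prime]] by blast
  define L where "L = max 2 (length ms)"
  have "\<exists>ys. length ys = L \<and> radically_generates R q ys" if q: "prime_ideal_in R q" for q
  proof -
    have "\<exists>xs. length xs \<le> L \<and> radically_generates R q xs"
    proof (cases "q = m \<or> q = {0}")
      case True
      have "0 ^ 1 \<in> ideal_gen R (set [])" using ideal_0[OF ideal_gen_ideal[OF sr]] by simp
      then have "\<forall>w\<in>{0}. \<exists>k. w ^ k \<in> ideal_gen R (set [])" by blast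
      then have "radically_generates R {0} []" unfolding radically_generates_def by simp
      moreover have "length ms \<le> L" "length [] \<le> L" unfolding L_def by simp_all
      ultimately show ?thesis using True ms by blast
    next
      case False
      then obtain x y where "radically_generates R q [x, y]"
        using intermediate_prime_two_generators q unfolding intermediate_prime_def by blast
      then show ?thesis unfolding L_def by (intro exI[of _ "[x, y]"]) simp
    qed
    then show ?thesis
      using radically_generates_pad ideal_0[OF prime_ideal_ideal[OF q]] by blast
  qed
  then show ?thesis by blast
qed

end

section \<open>p-th roots in characteristic p\<close>

lemma char_eq:
  assumes "prime p" "(of_nat p :: 'a::field) = 0"
  shows "CHAR('a) = p"
proof -
  have "CHAR('a) dvd p" using assms(2) of_nat_eq_0_iff_char_dvd by blast
  moreover have "CHAR('a) \<noteq> 1" by (metis of_nat_1 of_nat_CHAR one_neq_zero)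
  ultimately show ?thesis using assms(1) by (auto simp: prime_nat_iff)
qed

definition rt :: "nat \<Rightarrow> nat \<Rightarrow> 'a::field \<Rightarrow> 'a" where
  "rt p n x = (THE y. y ^ (p ^ n) = x)"

lemma pth_roots_rt: "pth_roots p x = range (\<lambda>n. rt p n x)"
  unfolding pth_roots_def rt_def by auto

context
  fixes p :: nat
  assumes ac: "alg_closed_field TYPE('a::field)" and pr: "prime p" and ch: "(of_nat p :: 'a) = 0"
begin

lemma p_power_pos: "p ^ n > 0"
  using pr by (simp add: prime_gt_0_nat)

lemma frobenius_add: "(x + y :: 'a) ^ (p ^ n) = x ^ (p ^ n) + y ^ (p ^ n)"
  using freshmans_dream'[of "p ^ n" n x y] char_eq[OF pr ch] pr by simp

lemma frobenius_inj: "(x :: 'a) ^ (p ^ n) = y ^ (p ^ n) \<Longrightarrow> x = y"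
  using frobenius_add[of "x - y" y n] by simp

lemma root_exists: "\<exists>y::'a. y ^ (p ^ n) = x"
proof -
  let ?q = "monom (1::'a) (p ^ n) + [:-x:]"
  have "degree ?q = p ^ n"
    using p_power_pos[of n] by (subst degree_add_eq_left) (auto simp: degree_monom_eq)
  then have "degree ?q > 0" using p_power_pos[of n] by simp
  then obtain y where "poly ?q y = 0" using ac unfolding alg_closed_field_def by blast
  then show ?thesis by (auto simp: poly_monom)
qed

lemma rt_power: "rt p n (x::'a) ^ (p ^ n) = x"
proof -
  have "\<exists>!y::'a. y ^ (p ^ n) = x" using root_exists frobenius_inj by blast
  then show ?thesis unfolding rt_def by (rule theI')
qed

lemma rt_unique: "(y::'a) ^ (p ^ n) = x \<Longrightarrow> rt p n x = y"
  using rt_power[of n x] frobenius_inj[of "rt p n x" n y] by simp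

lemma rt_add: "rt p n ((a::'a) + b) = rt p n a + rt p n b"
  by (rule rt_unique) (simp add: frobenius_add rt_power)

lemma rt_mult: "rt p n ((a::'a) * b) = rt p n a * rt p n b"
  by (rule rt_unique) (simp add: power_mult_distrib rt_power)

lemma rt_0: "rt p n (0::'a) = 0"
  by (rule rt_unique) (use p_power_pos[of n] in simp)

section \<open>The ring R_inf\<close>

context
  fixes R :: "'a set"
  assumes sr: "subring_of R"
begin

text \<open>The integrality condition in the definition of \<open>R_inf\<close> is automatic:
  \<open>x\<close> is a root of the monic polynomial \<open>X ^ (p ^ n) - x ^ (p ^ n)\<close>.\<close>
lemma R_inf_iff: "x \<in> R_inf p R \<longleftrightarrow> (\<exists>n. x ^ (p ^ n) \<in> R)"
proof
  assume "\<exists>n. x ^ (p ^ n) \<in> R"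
  then obtain n where n: "x ^ (p ^ n) \<in> R" by blast
  let ?q = "monom (1::'a) (p ^ n) + [:- (x ^ (p ^ n)):]"
  have dq: "degree ?q = p ^ n"
    using p_power_pos[of n] by (subst degree_add_eq_left) (auto simp: degree_monom_eq)
  have "lead_coeff ?q = 1" unfolding dq using p_power_pos[of n] by (simp add: coeff_pCons')
  moreover have "coeff ?q i \<in> R" for i
    using subring_0[OF sr] subring_1[OF sr] subring_uminus[OF sr n] p_power_pos[of n]
    by (cases "i = 0") (auto simp: coeff_pCons')
  moreover have "poly ?q x = 0" by (simp add: poly_monom)
  ultimately show "x \<in> R_inf p R" unfolding R_inf_def R_plus_def using n by blast
qed (auto simp: R_inf_def)

lemma R_subset_R_inf: "R \<subseteq> R_inf p R"
proof
  fix x assume "x \<in> R"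
  then have "x ^ (p ^ 0) \<in> R" by simp
  then show "x \<in> R_inf p R" using R_inf_iff by blast
qed

lemma power_in_R_mono: "x ^ (p ^ a) \<in> R \<Longrightarrow> x ^ (p ^ (a + b)) \<in> R"
  using subring_power[OF sr, of "x ^ (p ^ a)" "p ^ b"] by (simp add: power_add power_mult)

lemma R_inf_subring: "subring_of (R_inf p R)"
  unfolding subring_of_def
proof (intro conjI ballI)
  show "0 \<in> R_inf p R" "1 \<in> R_inf p R" using R_subset_R_inf subring_0[OF sr] subring_1[OF sr] by auto
next
  fix x y assume "x \<in> R_inf p R" "y \<in> R_inf p R"
  then obtain a b where "x ^ (p ^ a) \<in> R" "y ^ (p ^ b) \<in> R" using R_inf_iff by blast
  then have a: "x ^ (p ^ (a + b)) \<in> R" and b: "y ^ (p ^ (a + b)) \<in> R"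
    using power_in_R_mono[of y b a] power_in_R_mono[of x a b] by (simp_all add: add.commute)
  have "(x + y) ^ (p ^ (a + b)) \<in> R" unfolding frobenius_add using subring_add[OF sr a b] .
  moreover have "(x * y) ^ (p ^ (a + b)) \<in> R"
    unfolding power_mult_distrib using subring_mult[OF sr a b] .
  moreover have "(- x) ^ (p ^ (a + b)) = (-1) ^ (p ^ (a + b)) * x ^ (p ^ (a + b))"
    by (metis mult_minus1 power_mult_distrib)
  then have "(- x) ^ (p ^ (a + b)) \<in> R"
    using subring_mult[OF sr subring_power[OF sr subring_uminus[OF sr subring_1[OF sr]]] a] by simp
  ultimately show "x + y \<in> R_inf p R" "x * y \<in> R_inf p R" "- x \<in> R_inf p R"
    using R_inf_iff by blast+
qed

lemma rt_R_inf: "x \<in> R_inf p R \<Longrightarrow> rt p m x \<in> R_inf p R"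
proof -
  assume "x \<in> R_inf p R"
  then obtain n where "x ^ (p ^ n) \<in> R" using R_inf_iff by blast
  moreover have "rt p m x ^ (p ^ (m + n)) = x ^ (p ^ n)" by (simp add: power_add power_mult rt_power)
  ultimately have "rt p m x ^ (p ^ (m + n)) \<in> R" by simp
  then show ?thesis using R_inf_iff by blast
qed

lemma root_closed_part_ideal:
  assumes J: "ideal_in (R_inf p R) J"
  shows "ideal_in R {u \<in> R. \<forall>n. rt p n u \<in> J}"
  unfolding ideal_in_def
proof (intro conjI ballI)
  show "0 \<in> {u \<in> R. \<forall>n. rt p n u \<in> J}" using rt_0 ideal_0[OF J] subring_0[OF sr] by simp
next
  fix a b assume "a \<in> {u \<in> R. \<forall>n. rt p n u \<in> J}" "b \<in> {u \<in> R. \<forall>n. rt p n u \<in> J}"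
  then show "a + b \<in> {u \<in> R. \<forall>n. rt p n u \<in> J}"
    using rt_add ideal_add[OF J] subring_add[OF sr] by simp
next
  fix r a assume r: "r \<in> R" and "a \<in> {u \<in> R. \<forall>n. rt p n u \<in> J}"
  moreover have "rt p n r \<in> R_inf p R" for n using rt_R_inf R_subset_R_inf r by blast
  ultimately show "r * a \<in> {u \<in> R. \<forall>n. rt p n u \<in> J}"
    using rt_mult ideal_mult_left[OF J] subring_mult[OF sr] by simp
qed blast

lemma R_inf_prime_root_generators:
  assumes P: "prime_ideal_in (R_inf p R) P" and xs: "radically_generates R (P \<inter> R) xs"
  shows "set xs \<subseteq> R_inf p R \<and> P = ideal_gen (R_inf p R) (\<Union>x\<in>set xs. pth_roots p x)"
proof -
  let ?S = "R_inf p R" and ?A = "\<Union>x\<in>set xs. pth_roots p x"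
  let ?J = "ideal_gen ?S ?A"
  have sS: "subring_of ?S" by (rule R_inf_subring)
  have Pi: "ideal_in ?S P" by (rule prime_ideal_ideal[OF P])
  have xsR: "set xs \<subseteq> R" and xsP: "set xs \<subseteq> P" using xs unfolding radically_generates_def by auto
  have AS: "?A \<subseteq> ?S" using rt_R_inf R_subset_R_inf xsR unfolding pth_roots_rt by blast
  have Ji: "ideal_in ?S ?J" by (rule ideal_gen_ideal[OF sS AS])
  have "?A \<subseteq> P"
  proof
    fix y assume "y \<in> ?A"
    then obtain x n where "x \<in> set xs" "y = rt p n x" unfolding pth_roots_rt by blast
    then show "y \<in> P"
      using prime_ideal_power[OF sS P, of y "p ^ n"] AS rt_power[of n x] xsP \<open>y \<in> ?A\<close> by auto
  qed
  then have "?J \<subseteq> P" by (rule ideal_gen_least[OF Pi])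
  moreover have "P \<subseteq> ?J"
  proof
    fix z assume zP: "z \<in> P"
    have zS: "z \<in> ?S" using ideal_subset[OF Pi zP] .
    obtain n where n: "z ^ (p ^ n) \<in> R" using zS R_inf_iff by blast
    have "z ^ 1 \<in> P" using zP by simp
    moreover have "1 \<le> p ^ n" using p_power_pos[of n] by linarith
    ultimately have "z ^ (p ^ n) \<in> P" by (rule ideal_power_mono[OF sS Pi zS])
    then obtain k where k: "(z ^ (p ^ n)) ^ k \<in> ideal_gen R (set xs)"
      using xs n unfolding radically_generates_def by blast
    let ?T = "{u \<in> R. \<forall>m. rt p m u \<in> ?J}"
    have Ti: "ideal_in R ?T" by (rule root_closed_part_ideal[OF Ji])
    have "set xs \<subseteq> ?T"
      using xsR ideal_gen_superset[of ?A ?S] unfolding pth_roots_rt by blast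
    then have "(z ^ (p ^ n)) ^ k \<in> ?T" using k ideal_gen_least[OF Ti] by blast
    \<comment> \<open>Since \<open>k \<le> p ^ k\<close>, also \<open>z ^ (p ^ (n + k))\<close> lies in \<open>?T\<close>.\<close>
    moreover have "k \<le> p ^ k" using power_gt_expt[of p k] prime_gt_1_nat[OF pr] by simp
    ultimately have "(z ^ (p ^ n)) ^ (p ^ k) \<in> ?T" using ideal_power_mono[OF sr Ti n] by blast
    then have "rt p (n + k) (z ^ (p ^ (n + k))) \<in> ?J" by (simp add: power_add power_mult)
    then show "z \<in> ?J" using rt_unique[of z "n + k"] by simp
  qed
  ultimately show ?thesis using xsR R_subset_R_inf by blast
qed

end

end

theorem lemma7p9:
  fixes R :: "'a::field set" and p :: nat
  assumes "alg_closed_field TYPE('a)"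
    and "subring_of R"
    and "algebraic_over R"
    and "prime p" and "(of_nat p :: 'a) = 0"
    and "noetherian_ring R" and "local_ring R"
  shows "(\<forall>P. prime_ideal_in (R_inf p R) P \<longrightarrow>
            (\<exists>xs. set xs \<subseteq> R_inf p R \<and>
                  P = ideal_gen (R_inf p R) (\<Union>x\<in>set xs. pth_roots p x)))
       \<and> (krull_dim_less R 3 \<longrightarrow>
           (\<exists>l::nat. \<forall>P. prime_ideal_in (R_inf p R) P \<longrightarrow>
              (\<exists>xs. length xs = l \<and> set xs \<subseteq> R_inf p R \<and>
                    P = ideal_gen (R_inf p R) (\<Union>x\<in>set xs. pth_roots p x))))"
proof -
  note ac = assms(1) and sr = assms(2) and pr = assms(4) and ch = assms(5) and noeth = assms(6)
  have contract: "prime_ideal_in R (P \<inter> R)" if "prime_ideal_in (R_inf p R) P" for P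
    using prime_ideal_contract[OF sr R_subset_R_inf[OF ac pr ch sr] that] .
  note reduce = R_inf_prime_root_generators[OF ac pr ch sr]
  have "\<exists>xs. set xs \<subseteq> R_inf p R \<and> P = ideal_gen (R_inf p R) (\<Union>x\<in>set xs. pth_roots p x)"
    if P: "prime_ideal_in (R_inf p R) P" for P
    using noetherian_radically_generates[OF noeth prime_ideal_ideal[OF contract[OF P]]] reduce[OF P]
    by blast
  moreover have "\<exists>l. \<forall>P. prime_ideal_in (R_inf p R) P \<longrightarrow>
      (\<exists>xs. length xs = l \<and> set xs \<subseteq> R_inf p R \<and>
            P = ideal_gen (R_inf p R) (\<Union>x\<in>set xs. pth_roots p x))"
    if dim: "krull_dim_less R 3"
  proof -
    obtain m where m: "maximal_ideal_in R m" "\<And>M. maximal_ideal_in R M \<Longrightarrow> M = m"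
      using assms(7) unfolding local_ring_def by blast
    obtain L where L: "\<forall>q. prime_ideal_in R q \<longrightarrow> (\<exists>ys. length ys = L \<and> radically_generates R q ys)"
      using primes_radically_generated_bounded[OF sr noeth m dim] by blast
    show ?thesis
    proof (intro exI[of _ L] allI impI)
      fix P assume P: "prime_ideal_in (R_inf p R) P"
      then obtain ys where "length ys = L" "radically_generates R (P \<inter> R) ys"
        using L contract by blast
      then show "\<exists>xs. length xs = L \<and> set xs \<subseteq> R_inf p R \<and>
          P = ideal_gen (R_inf p R) (\<Union>x\<in>set xs. pth_roots p x)"
        using reduce[OF P] by blast
    qed
  qed
  ultimately show ?thesis by blast
qed

end
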